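(* Let $k\ge 4$ be an even integer. Then there exists an intersecting family $\mathcal{F}\subset\binom{[2k]}{k}$ such that $$\mathcal{D}(\mathcal{F})=\bigcup_{j=0}^{k-1}\binom{[2k]}{j}.$$ In particular $\binom{[2k]}{k-1}\subset\mathcal{D}(\mathcal{F})$.
   Context: $[m]=\{1,2,\dots,m\}$. For a set $S$ and an integer $j\ge 0$, $\binom{S}{j}$ denotes the family of all $j$-element subsets of $S$. For a family $\mathcal{F}$ of sets, $\mathcal{D}(\mathcal{F})=\{F\setminus F' : F,F'\in\mathcal{F}\}$ (the family of difference sets). A family $\mathcal{F}$ is intersecting if $F\cap F'\neq\emptyset$ for all $F,F'\in\mathcal{F}$. *)

theory Defs
  imports Main
begin

definition ksubsets :: "'a set \<Rightarrow> nat \<Rightarrow> 'a set set" where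
  "ksubsets S j = {A. A \<subseteq> S \<and> card A = j}"

definition diff_family :: "'a set set \<Rightarrow> 'a set set" where
  "diff_family F = {A - B | A B. A \<in> F \<and> B \<in> F}"

definition intersecting :: "'a set set \<Rightarrow> bool" where
  "intersecting F \<longleftrightarrow> (\<forall>A\<in>F. \<forall>B\<in>F. A \<inter> B \<noteq> {})"

end

theory Submission
  imports Defs
begin

(*
  A family of k-subsets of {1..2k} containing exactly one set of each complementary pair is
  intersecting, and D = A - B lies in its difference family as soon as D = A \<inter> C for k-sets
  A inside and C outside the family (take B the complement of C).  So it suffices to give a
  self-dual membership rule and, for every D with |D| \<le> k - 1, such a pair A, C extending D.

  The parity of |A \<inter> {1..k-1}| is self-dual because k - 1 is odd, and extending D by suitable
  numbers of elements of the blocks {1..k-1} and {k..2k-2} separates most D by parity.  The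
  configurations where D nearly fills a block are repaired by the two top elements: a set
  containing 2k but not 2k-1 is decided by last_rule, whose exceptional clause compares the gap
  of A in {1..k-1} with A \<inter> {k..2k-2} through the shift w \<mapsto> w + k - 1, and a set containing
  2k-1 but not 2k is decided through its complement, which keeps the rule self-dual.
*)

lemma intersecting_if_no_complements:
  assumes "finite U" "card U = 2 * k" "F \<subseteq> ksubsets U k"
    and no_compl: "\<And>A. A \<in> F \<Longrightarrow> U - A \<notin> F"
  shows "intersecting F"
  unfolding intersecting_def
proof (intro ballI notI)
  fix A B assume A: "A \<in> F" and B: "B \<in> F" and disj: "A \<inter> B = {}"
  have "A \<subseteq> U" "card A = k" "B \<subseteq> U" "card B = k"
    using A B assms(3) by (auto simp: ksubsets_def)
  then have "card (U - A) = card B" "B \<subseteq> U - A"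
    using assms(1,2) disj by (auto simp: card_Diff_subset finite_subset)
  then have "B = U - A"
    using assms(1) by (simp add: card_subset_eq)
  then show False
    using no_compl A B by simp
qed

lemma diff_family_subset_if_intersecting:
  assumes "finite U" "F \<subseteq> ksubsets U k" "intersecting F"
  shows "diff_family F \<subseteq> (\<Union>j\<in>{0..k-1}. ksubsets U j)"
proof
  fix X assume "X \<in> diff_family F"
  then obtain A B where X: "X = A - B" and AB: "A \<in> F" "B \<in> F"
    unfolding diff_family_def by blast
  have A: "A \<subseteq> U" "card A = k"
    using AB assms(2) by (auto simp: ksubsets_def)
  have "A \<inter> B \<noteq> {}"
    using AB assms(3) unfolding intersecting_def by blast
  then have "card (A \<inter> B) \<ge> 1"
    using A assms(1) by (simp add: Suc_le_eq card_gt_0_iff finite_subset)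
  moreover have "card (A - B) = card A - card (A \<inter> B)"
    using A assms(1) by (simp add: card_Diff_subset_Int finite_subset)
  ultimately show "X \<in> (\<Union>j\<in>{0..k-1}. ksubsets U j)"
    using A X by (auto simp: ksubsets_def)
qed

lemma obtain_disjoint_subsets:
  assumes "finite X" "p + q \<le> card X"
  obtains P Q where "P \<subseteq> X" "Q \<subseteq> X" "P \<inter> Q = {}" "card P = p" "card Q = q"
proof -
  obtain P where P: "P \<subseteq> X" "card P = p"
    using obtain_subset_with_card_n[of p X] assms by auto
  have "q \<le> card (X - P)"
    using assms P by (simp add: card_Diff_subset finite_subset)
  then obtain Q where "Q \<subseteq> X - P" "card Q = q"
    using obtain_subset_with_card_n by metis
  with P show ?thesis
    using that by blast
qed

lemma extend_to_pair:
  assumes fin: "finite D" "finite L" "finite M" "finite T"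
    and disj: "L \<inter> M = {}" "T \<inter> (L \<union> M) = {}"
    and EA: "EA \<subseteq> T - D" and EC: "EC \<subseteq> T - D" and "EA \<inter> EC = {}"
    and room: "p1 + q1 \<le> card (L - D)" "p2 + q2 \<le> card (M - D)"
    and size: "card D + card EA + p1 + p2 = n" "card D + card EC + q1 + q2 = n"
  obtains A C where "A \<subseteq> D \<union> L \<union> M \<union> T" "C \<subseteq> D \<union> L \<union> M \<union> T" "card A = n" "card C = n"
    "A \<inter> C = D" "card (A \<inter> L) = card (D \<inter> L) + p1" "card (C \<inter> L) = card (D \<inter> L) + q1"
    "A \<inter> T = (D \<union> EA) \<inter> T" "C \<inter> T = (D \<union> EC) \<inter> T"
proof -
  obtain P1 Q1 where P1Q1: "P1 \<subseteq> L - D" "Q1 \<subseteq> L - D" "P1 \<inter> Q1 = {}" "card P1 = p1" "card Q1 = q1"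
    using obtain_disjoint_subsets[of "L - D" p1 q1] room(1) fin(2) by auto
  obtain P2 Q2 where P2Q2: "P2 \<subseteq> M - D" "Q2 \<subseteq> M - D" "P2 \<inter> Q2 = {}" "card P2 = p2" "card Q2 = q2"
    using obtain_disjoint_subsets[of "M - D" p2 q2] room(2) fin(3) by auto
  have fin_parts: "finite EA" "finite EC" "finite P1" "finite Q1" "finite P2" "finite Q2"
    using EA EC P1Q1(1,2) P2Q2(1,2) fin by (auto intro: finite_subset)
  define A where "A = D \<union> EA \<union> P1 \<union> P2"
  define C where "C = D \<union> EC \<union> Q1 \<union> Q2"
  have "card A = card D + card EA + card P1 + card P2"
  proof -
    have "D \<inter> EA = {}" "(D \<union> EA) \<inter> P1 = {}" "(D \<union> EA \<union> P1) \<inter> P2 = {}"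
      using EA P1Q1(1) P2Q2(1) disj by blast+
    then show ?thesis
      unfolding A_def using fin fin_parts by (simp add: card_Un_disjoint)
  qed
  moreover have "card C = card D + card EC + card Q1 + card Q2"
  proof -
    have "D \<inter> EC = {}" "(D \<union> EC) \<inter> Q1 = {}" "(D \<union> EC \<union> Q1) \<inter> Q2 = {}"
      using EC P1Q1(2) P2Q2(2) disj by blast+
    then show ?thesis
      unfolding C_def using fin fin_parts by (simp add: card_Un_disjoint)
  qed
  moreover have "A \<inter> L = (D \<inter> L) \<union> P1" "C \<inter> L = (D \<inter> L) \<union> Q1"
    unfolding A_def C_def using EA EC P1Q1 P2Q2 disj by blast+
  moreover have "(D \<inter> L) \<inter> P1 = {}" "(D \<inter> L) \<inter> Q1 = {}"
    using P1Q1 by blast+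
  moreover have "A \<inter> C = D"
    unfolding A_def C_def using EA EC \<open>EA \<inter> EC = {}\<close> P1Q1 P2Q2 disj by blast
  moreover have "A \<subseteq> D \<union> L \<union> M \<union> T" "C \<subseteq> D \<union> L \<union> M \<union> T"
    "A \<inter> T = (D \<union> EA) \<inter> T" "C \<inter> T = (D \<union> EC) \<inter> T"
    unfolding A_def C_def using EA EC P1Q1 P2Q2 disj by blast+
  ultimately show ?thesis
    using that P1Q1(4,5) P2Q2(4,5) size fin fin_parts by (simp add: card_Un_disjoint)
qed

lemma obtain_parity_adjusted:
  fixes r c :: nat
  assumes "r \<ge> 1"
  obtains p where "p \<le> r" "r \<le> p + 1" "odd (c + p) \<longleftrightarrow> P"
proof (cases "odd (c + r) \<longleftrightarrow> P")
  case True
  then show ?thesis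
    using that[of r] by simp
next
  case False
  then show ?thesis
    using that[of "r - 1"] assms by (cases r) auto
qed

definition low :: "nat \<Rightarrow> nat set" where
  "low k = {1..k-1}"

definition mid :: "nat \<Rightarrow> nat set" where
  "mid k = {k..2*k-2}"

definition low_count :: "nat \<Rightarrow> nat set \<Rightarrow> nat" where
  "low_count k A = card (A \<inter> low k)"

definition last_rule :: "nat \<Rightarrow> nat set \<Rightarrow> bool" where
  "last_rule k A \<longleftrightarrow>
     (odd (low_count k A) \<and> low_count k A \<noteq> k - 1) \<or>
     (low_count k A = k - 2 \<and> (\<lambda>w. w + k - 1) ` (low k - A) = A \<inter> mid k)"

definition in_family :: "nat \<Rightarrow> nat set \<Rightarrow> bool" where
  "in_family k A =
     (if 2*k \<in> A \<and> 2*k-1 \<notin> A then last_rule k A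
      else if 2*k-1 \<in> A \<and> 2*k \<notin> A then \<not> last_rule k ({1..2*k} - A)
      else odd (low_count k A))"

definition family :: "nat \<Rightarrow> nat set set" where
  "family k = {A \<in> ksubsets {1..2*k} k. in_family k A}"

lemma card_low [simp]: "card (low k) = k - 1"
  by (simp add: low_def)

lemma card_mid: "k \<ge> 1 \<Longrightarrow> card (mid k) = k - 1"
  by (simp add: mid_def)

lemma low_mid_disjoint: "low k \<inter> mid k = {}"
  by (auto simp: low_def mid_def)

lemma ground_partition:
  "k \<ge> 1 \<Longrightarrow> {1..2*k} = low k \<union> mid k \<union> {2*k-1, 2*k}"
  by (auto simp: low_def mid_def)

lemma tops_not_in_blocks:
  "2*k-1 \<notin> low k" "2*k \<notin> low k" "k \<ge> 1 \<Longrightarrow> 2*k-1 \<notin> mid k" "k \<ge> 1 \<Longrightarrow> 2*k \<notin> mid k"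
  by (auto simp: low_def mid_def)

lemma low_count_le: "low_count k A \<le> k - 1"
  unfolding low_count_def by (metis card_low card_mono finite_atLeastAtMost inf_le2 low_def)

lemma low_count_complement:
  "low_count k ({1..2*k} - A) = k - 1 - low_count k A"
proof -
  have "({1..2*k} - A) \<inter> low k = low k - A \<inter> low k"
    by (auto simp: low_def)
  then show ?thesis
    by (simp add: low_count_def card_Diff_subset low_def)
qed

lemma card_by_blocks:
  assumes "k \<ge> 1" "D \<subseteq> {1..2*k}"
  shows "card D = low_count k D + card (D \<inter> mid k) + card (D \<inter> {2*k-1, 2*k})"
proof -
  have "finite D"
    using assms(2) finite_subset by blast
  moreover have "D = (D \<inter> low k) \<union> (D \<inter> mid k) \<union> (D \<inter> {2*k-1, 2*k})"
    using assms ground_partition by blast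
  moreover have "(D \<inter> low k) \<inter> (D \<inter> mid k) = {}"
    "((D \<inter> low k) \<union> (D \<inter> mid k)) \<inter> (D \<inter> {2*k-1, 2*k}) = {}"
    using low_mid_disjoint tops_not_in_blocks assms(1) by blast+
  ultimately show ?thesis
    unfolding low_count_def by (metis card_Un_disjoint finite_Int finite_Un)
qed

lemma odd_low_count_complement:
  assumes "even k" "k \<ge> 1"
  shows "odd (low_count k ({1..2*k} - A)) \<longleftrightarrow> even (low_count k A)"
  using low_count_le[of k A] assms unfolding low_count_complement
  by (auto simp: even_diff_nat)

lemma in_family_complement:
  assumes "even k" "k \<ge> 1" "A \<subseteq> {1..2*k}"
  shows "in_family k ({1..2*k} - A) \<longleftrightarrow> \<not> in_family k A"
proof -
  have "{1..2*k} - ({1..2*k} - A) = A" "2*k-1 \<in> {1..2*k}" "2*k \<in> {1..2*k}" "2*k-1 \<noteq> 2*k"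
    using assms by auto
  then show ?thesis
    using odd_low_count_complement[OF assms(1,2), of A] unfolding in_family_def by auto
qed

lemma in_family_iff_odd:
  "(2*k \<in> A \<longleftrightarrow> 2*k-1 \<in> A) \<Longrightarrow> in_family k A \<longleftrightarrow> odd (low_count k A)"
  unfolding in_family_def by auto

lemma in_family_iff_last_rule:
  "\<lbrakk>2*k \<in> A; 2*k-1 \<notin> A\<rbrakk> \<Longrightarrow> in_family k A \<longleftrightarrow> last_rule k A"
  unfolding in_family_def by auto

lemma in_family_lastI:
  "\<lbrakk>2*k \<in> A; 2*k-1 \<notin> A; odd (low_count k A); low_count k A \<noteq> k - 1\<rbrakk> \<Longrightarrow> in_family k A"
  unfolding in_family_def last_rule_def by auto

lemma not_in_family_lastI:
  "\<lbrakk>k \<ge> 2; 2*k \<in> A; 2*k-1 \<notin> A;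
    (even (low_count k A) \<and> low_count k A \<noteq> k - 2) \<or> low_count k A = k - 1\<rbrakk>
   \<Longrightarrow> \<not> in_family k A"
  unfolding in_family_def last_rule_def by auto

lemma in_family_penultI:
  assumes "even k" "k \<ge> 2" "A \<subseteq> {1..2*k}" "2*k-1 \<in> A" "2*k \<notin> A"
    and "low_count k A = 0 \<or> (odd (low_count k A) \<and> low_count k A \<noteq> 1)"
  shows "in_family k A"
proof -
  have "\<not> last_rule k ({1..2*k} - A)"
    using odd_low_count_complement[of k A] assms(1,2,6) low_count_le[of k A]
    unfolding last_rule_def low_count_complement by auto
  then show ?thesis
    using assms(4,5) unfolding in_family_def by auto
qed

lemma not_in_family_penultI:
  assumes "even k" "A \<subseteq> {1..2*k}" "2*k-1 \<in> A" "2*k \<notin> A"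
    and "even (low_count k A)" "low_count k A \<ge> 2"
  shows "\<not> in_family k A"
proof -
  have "2*k-1 \<in> {1..2*k}"
    using assms(2,3) by blast
  then have "k \<ge> 1"
    by simp
  then have "last_rule k ({1..2*k} - A)"
    using odd_low_count_complement[of k A] assms(1,5,6) low_count_le[of k A]
    unfolding last_rule_def low_count_complement by auto
  then show ?thesis
    using assms(3,4) unfolding in_family_def by auto
qed

lemma inter_in_diff_family:
  assumes "even k" "k \<ge> 1" "A \<subseteq> {1..2*k}" "C \<subseteq> {1..2*k}" "card A = k" "card C = k"
    and "in_family k A" "\<not> in_family k C"
  shows "A \<inter> C \<in> diff_family (family k)"
proof -
  have "card ({1..2*k} - C) = k"
    using assms(4,6) by (simp add: card_Diff_subset finite_subset)
  then have "A \<in> family k" "{1..2*k} - C \<in> family k"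
    using assms in_family_complement[of k C] by (auto simp: family_def ksubsets_def)
  moreover have "A \<inter> C = A - ({1..2*k} - C)"
    using assms(3) by blast
  ultimately show ?thesis
    unfolding diff_family_def by blast
qed

context
  fixes k :: nat and D :: "nat set"
  assumes k_ge_4: "k \<ge> 4" and even_k: "even k" and D_sub: "D \<subseteq> {1..2*k}"
begin

lemma in_diff_family_by_extension:
  assumes "EA \<subseteq> {2*k-1, 2*k} - D" "EC \<subseteq> {2*k-1, 2*k} - D" "EA \<inter> EC = {}"
    and "p1 + q1 \<le> k - 1 - low_count k D" "p2 + q2 \<le> k - 1 - card (D \<inter> mid k)"
    and "card D + card EA + p1 + p2 = k" "card D + card EC + q1 + q2 = k"
    and A_in: "\<And>A. \<lbrakk>A \<subseteq> {1..2*k}; low_count k A = low_count k D + p1;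
               2*k-1 \<in> A \<longleftrightarrow> 2*k-1 \<in> D \<union> EA; 2*k \<in> A \<longleftrightarrow> 2*k \<in> D \<union> EA\<rbrakk> \<Longrightarrow> in_family k A"
    and C_out: "\<And>C. \<lbrakk>C \<subseteq> {1..2*k}; low_count k C = low_count k D + q1;
               2*k-1 \<in> C \<longleftrightarrow> 2*k-1 \<in> D \<union> EC; 2*k \<in> C \<longleftrightarrow> 2*k \<in> D \<union> EC\<rbrakk> \<Longrightarrow> \<not> in_family k C"
  shows "D \<in> diff_family (family k)"
proof -
  have blocks: "finite (low k)" "finite (mid k)" "low k \<inter> mid k = {}"
    "{2*k-1, 2*k} \<inter> (low k \<union> mid k) = {}"
    using low_mid_disjoint tops_not_in_blocks k_ge_4 by (auto simp: low_def mid_def)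
  have "card (low k - D) = k - 1 - low_count k D"
    by (simp add: low_count_def card_Diff_subset_Int Int_commute blocks)
  moreover have "card (mid k - D) = k - 1 - card (D \<inter> mid k)"
    using card_mid k_ge_4 by (simp add: card_Diff_subset_Int Int_commute blocks)
  ultimately obtain A C where AC: "A \<subseteq> D \<union> low k \<union> mid k \<union> {2*k-1, 2*k}"
    "C \<subseteq> D \<union> low k \<union> mid k \<union> {2*k-1, 2*k}" "card A = k" "card C = k" "A \<inter> C = D"
    "low_count k A = low_count k D + p1" "low_count k C = low_count k D + q1"
    "A \<inter> {2*k-1, 2*k} = (D \<union> EA) \<inter> {2*k-1, 2*k}" "C \<inter> {2*k-1, 2*k} = (D \<union> EC) \<inter> {2*k-1, 2*k}"
    using extend_to_pair[of D "low k" "mid k" "{2*k-1, 2*k}" EA EC p1 q1 p2 q2 k] blocks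
      finite_subset[OF D_sub] assms(1-7) unfolding low_count_def by auto
  have ground: "D \<union> low k \<union> mid k \<union> {2*k-1, 2*k} = {1..2*k}"
    using D_sub ground_partition[of k] k_ge_4 by auto
  have "2*k-1 \<in> A \<longleftrightarrow> 2*k-1 \<in> D \<union> EA" "2*k \<in> A \<longleftrightarrow> 2*k \<in> D \<union> EA"
    using AC(8) by blast+
  then have "in_family k A"
    using A_in AC(1,6) unfolding ground by blast
  have "2*k-1 \<in> C \<longleftrightarrow> 2*k-1 \<in> D \<union> EC" "2*k \<in> C \<longleftrightarrow> 2*k \<in> D \<union> EC"
    using AC(9) by blast+
  then have "\<not> in_family k C"
    using C_out AC(2,7) unfolding ground by blast
  with \<open>in_family k A\<close> show ?thesis
    using inter_in_diff_family[OF even_k _ _ _ AC(3,4)] AC(1,2,5) k_ge_4 unfolding ground by simp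
qed

lemma both_tops_in_diff_family:
  assumes "card D \<le> k - 1" "2*k-1 \<in> D" "2*k \<in> D"
  shows "D \<in> diff_family (family k)"
proof -
  define a where "a = low_count k D"
  define r where "r = k - card D"
  have "D \<inter> {2*k-1, 2*k} = {2*k-1, 2*k}"
    using assms(2,3) by blast
  then have "card D = a + card (D \<inter> mid k) + 2"
    using card_by_blocks[OF _ D_sub] k_ge_4 unfolding a_def by simp
  moreover have r: "r \<ge> 1" "card D + r = k"
    using assms(1) k_ge_4 unfolding r_def by auto
  moreover obtain p1 where "p1 \<le> r" "r \<le> p1 + 1" "odd (a + p1)"
    using obtain_parity_adjusted[OF r(1), of a True] by auto
  moreover obtain q1 where "q1 \<le> 1" "even (a + q1)"
    using obtain_parity_adjusted[of 1 a False] by auto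
  ultimately show ?thesis
    by (intro in_diff_family_by_extension[of "{}" "{}" p1 q1 "r - p1" "r - q1"])
      (use assms in \<open>simp_all add: a_def in_family_iff_odd\<close>)
qed

lemma no_top_in_diff_family_of_card_le:
  assumes "card D \<le> k - 2" "2*k-1 \<notin> D" "2*k \<notin> D"
  shows "D \<in> diff_family (family k)"
proof -
  define a where "a = low_count k D"
  define b where "b = card (D \<inter> mid k)"
  define r where "r = k - card D"
  have "D \<inter> {2*k-1, 2*k} = {}"
    using assms(2,3) by blast
  then have card_D: "card D = a + b"
    using card_by_blocks[OF _ D_sub] k_ge_4 unfolding a_def b_def by simp
  have r: "r \<ge> 2" "card D + r = k"
    using assms(1) k_ge_4 unfolding r_def by auto
  have tops: "{2*k-1, 2*k} \<subseteq> {2*k-1, 2*k} - D" "card {2*k-1, 2*k} = 2"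
    using assms(2,3) k_ge_4 by auto
  show ?thesis
  proof (cases "odd a")
    case True
    have "r - 1 \<ge> 1"
      using r(1) by simp
    then obtain q1 where "q1 \<le> r - 1" "r - 1 \<le> q1 + 1" "even (a + q1)"
      using obtain_parity_adjusted[of "r - 1" a False] by auto
    moreover have "a \<ge> 1"
      using True by (cases a) auto
    ultimately show ?thesis
      using card_D r tops True
      by (intro in_diff_family_by_extension[of "{2*k-1, 2*k}" "{}" 0 q1 "r - 2" "r - q1"])
        (use assms in \<open>simp_all add: a_def b_def in_family_iff_odd\<close>)
  next
    case False
    then have a_even: "even a"
      by simp
    obtain p1 where "p1 \<le> r" "r \<le> p1 + 1" "odd (a + p1)"
      using obtain_parity_adjusted[of r a True] r(1) by auto
    moreover have "p1 \<le> k - 1 - a"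
    proof (cases "b = 0")
      case True
      then have "even r"
        using even_k a_even card_D r(2) by auto
      then have "p1 \<noteq> r"
        using \<open>odd (a + p1)\<close> a_even by auto
      then show ?thesis
        using \<open>p1 \<le> r\<close> card_D r(2) True by auto
    next
      case False
      then show ?thesis
        using \<open>p1 \<le> r\<close> card_D r(2) by auto
    qed
    ultimately show ?thesis
      using card_D r tops a_even
      by (intro in_diff_family_by_extension[of "{}" "{2*k-1, 2*k}" p1 0 "r - p1" "r - 2"])
        (use assms in \<open>simp_all add: a_def b_def in_family_iff_odd\<close>)
  qed
qed

lemma no_top_in_diff_family_of_card_eq:
  assumes "card D = k - 1" "2*k-1 \<notin> D" "2*k \<notin> D"
  shows "D \<in> diff_family (family k)"
proof -
  define a where "a = low_count k D"
  define b where "b = card (D \<inter> mid k)"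
  have "D \<inter> {2*k-1, 2*k} = {}"
    using assms(2,3) by blast
  then have ab: "a + b = k - 1"
    using card_by_blocks[OF _ D_sub] k_ge_4 assms(1) unfolding a_def b_def by simp
  have tops: "{2*k-1} \<subseteq> {2*k-1, 2*k} - D" "{2*k} \<subseteq> {2*k-1, 2*k} - D" "2*k-1 \<noteq> 2*k"
    using assms(2,3) k_ge_4 by auto
  consider "a = 0" | "a = k - 1" | "1 \<le> a" "a \<le> k - 2"
    using ab by linarith
  then show ?thesis
  proof cases
    case 1
    then show ?thesis
      using ab tops assms(1) k_ge_4
      by (intro in_diff_family_by_extension[of "{2*k-1}" "{2*k}" 0 0 0 0])
        (use assms even_k in \<open>simp_all add: a_def in_family_penultI not_in_family_lastI\<close>)
  next
    case 2
    then show ?thesis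
      using ab tops assms(1) k_ge_4 even_k
      by (intro in_diff_family_by_extension[of "{}" "{2*k}" 0 0 1 0])
        (use assms in \<open>simp_all add: a_def b_def in_family_iff_odd not_in_family_lastI\<close>)
  next
    case 3
    obtain p1 where "p1 \<le> 1" "odd (a + p1)"
      using obtain_parity_adjusted[of 1 a True] by auto
    with 3 show ?thesis
      using ab assms(1) k_ge_4
      by (intro in_diff_family_by_extension[of "{}" "{}" p1 "1 - p1" "1 - p1" p1])
        (use assms in \<open>simp_all add: a_def b_def in_family_iff_odd\<close>)
  qed
qed

lemma last_only_in_diff_family_of_card_le:
  assumes "card D \<le> k - 2" "2*k-1 \<notin> D" "2*k \<in> D"
  shows "D \<in> diff_family (family k)"
proof -
  define a where "a = low_count k D"
  define r where "r = k - card D"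
  have "D \<inter> {2*k-1, 2*k} = {2*k}"
    using assms(2,3) by blast
  then have card_D: "card D = a + card (D \<inter> mid k) + 1"
    using card_by_blocks[OF _ D_sub] k_ge_4 unfolding a_def by simp
  have r: "r \<ge> 2" "card D + r = k"
    using assms(1) k_ge_4 unfolding r_def by auto
  obtain p1 where "p1 \<le> 1" "odd (a + p1)"
    using obtain_parity_adjusted[of 1 a True] by auto
  moreover have "r - 1 \<ge> 1"
    using r(1) by simp
  then obtain q1 where "q1 \<le> r - 1" "r - 1 \<le> q1 + 1" "even (a + q1)"
    using obtain_parity_adjusted[of "r - 1" a False] by auto
  moreover have "a + p1 \<ge> 1"
    using \<open>odd (a + p1)\<close> by (cases "a + p1") auto
  ultimately show ?thesis
    using card_D r assms(2) k_ge_4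
    by (intro in_diff_family_by_extension[of "{}" "{2*k-1}" p1 q1 "r - p1" "r - 1 - q1"])
      (use assms in \<open>simp_all add: a_def in_family_iff_odd in_family_lastI\<close>)
qed

lemma insert_pair_in_diff_family:
  assumes "card D = k - 1" "x \<in> {1..2*k} - D" "z \<in> {1..2*k} - D" "x \<noteq> z"
    and "in_family k (insert x D)" "\<not> in_family k (insert z D)"
  shows "D \<in> diff_family (family k)"
proof -
  have "finite D"
    using finite_subset[OF D_sub] by simp
  then have "card (insert x D) = k" "card (insert z D) = k"
    using assms(1-3) k_ge_4 by auto
  moreover have "insert x D \<inter> insert z D = D"
    using assms(2-4) by auto
  moreover have "insert x D \<subseteq> {1..2*k}" "insert z D \<subseteq> {1..2*k}"
    using assms(2,3) D_sub by auto
  moreover have "k \<ge> 1"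
    using k_ge_4 by simp
  ultimately show ?thesis
    using inter_in_diff_family[OF even_k] assms(5,6) by metis
qed

lemma low_count_insert:
  "x \<notin> low k \<Longrightarrow> low_count k (insert x D) = low_count k D"
  "x \<in> low k - D \<Longrightarrow> low_count k (insert x D) = low_count k D + 1"
  using finite_subset[OF D_sub] by (auto simp: low_count_def)

lemma last_only_in_diff_family_of_low_count_k_minus_2:
  assumes "card D = k - 1" "2*k-1 \<notin> D" "2*k \<in> D" "low_count k D = k - 2"
  shows "D \<in> diff_family (family k)"
proof -
  have "D \<inter> {2*k-1, 2*k} = {2*k}"
    using assms(2,3) by blast
  then have "card (D \<inter> mid k) = 0"
    using card_by_blocks[OF _ D_sub] k_ge_4 assms(1,4) by simp
  then have D_mid: "D \<inter> mid k = {}"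
    using finite_subset[OF D_sub] by auto
  have "card (low k - D) = 1"
    using assms(4) k_ge_4 by (simp add: low_count_def card_Diff_subset_Int Int_commute low_def)
  then obtain w where w: "low k - D = {w}"
    using card_1_singletonE by blast
  then have "1 \<le> w" "w \<le> k - 1"
    by (auto simp: low_def)
  define u where "u = w + k - 1"
  have "u \<in> mid k"
    using \<open>1 \<le> w\<close> \<open>w \<le> k - 1\<close> unfolding u_def mid_def by auto
  then have u: "u \<in> mid k" "u \<notin> low k" "u \<noteq> 2*k-1" "u \<notin> D"
    using D_mid low_mid_disjoint tops_not_in_blocks(3) k_ge_4 by auto
  have "last_rule k (insert u D)"
  proof -
    have "low k - insert u D = {w}" "insert u D \<inter> mid k = {u}"
      using w u D_mid by auto
    moreover have "low_count k (insert u D) = k - 2"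
      using low_count_insert(1)[OF u(2)] assms(4) by simp
    ultimately show ?thesis
      unfolding last_rule_def u_def by simp
  qed
  moreover have "\<not> in_family k (insert (2*k-1) D)"
    using assms(3,4) even_k k_ge_4 tops_not_in_blocks(1)
    by (simp add: in_family_iff_odd low_count_insert)
  ultimately show ?thesis
    using u assms(2,3) D_sub k_ge_4 mid_def
    by (intro insert_pair_in_diff_family[of u "2*k-1"])
      (auto simp: in_family_iff_last_rule assms(1))
qed

lemma last_only_in_diff_family_of_low_count_k_minus_3:
  assumes "card D = k - 1" "2*k-1 \<notin> D" "2*k \<in> D" "low_count k D = k - 3"
  shows "D \<in> diff_family (family k)"
proof -
  have "D \<inter> {2*k-1, 2*k} = {2*k}"
    using assms(2,3) by blast
  then have "card (D \<inter> mid k) = 1"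
    using card_by_blocks[OF _ D_sub] k_ge_4 assms(1,4) by simp
  then obtain m where m: "D \<inter> mid k = {m}"
    using card_1_singletonE by blast
  have "card (low k - D) = 2"
    using assms(4) k_ge_4 by (simp add: low_count_def card_Diff_subset_Int Int_commute low_def)
  then obtain w1 w2 where w: "low k - D = {w1, w2}" "w1 \<noteq> w2"
    by (meson card_2_iff)
  obtain q s where qs: "low k - D = {q, s}" "q \<noteq> s" "s + k - 1 \<noteq> m"
  proof (cases "w2 + k - 1 = m")
    case True
    then have "w1 + k - 1 \<noteq> m"
      using w(2) k_ge_4 by simp
    moreover have "low k - D = {w2, w1}"
      using w(1) by blast
    ultimately show ?thesis
      using that w(2) by blast
  next
    case False
    then show ?thesis
      using that w by blast
  qed
  have q: "q \<in> low k" "q \<notin> D" "q \<noteq> 2*k-1" "q \<noteq> 2*k"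
    using qs(1) tops_not_in_blocks(1,2) by blast+
  have "in_family k (insert (2*k-1) D)"
    using assms(3,4) even_k k_ge_4 tops_not_in_blocks(1)
    by (simp add: in_family_iff_odd low_count_insert)
  moreover have "\<not> last_rule k (insert q D)"
  proof -
    have "low k - insert q D = {s}" "insert q D \<inter> mid k = {m}"
      using qs(1,2) m q(1) low_mid_disjoint by auto
    moreover have "low_count k (insert q D) = k - 2"
      using low_count_insert(2)[of q] q(1,2) assms(4) k_ge_4 by simp
    ultimately show ?thesis
      using qs(3) even_k k_ge_4 unfolding last_rule_def by auto
  qed
  ultimately show ?thesis
    using q assms(2,3) D_sub k_ge_4
    by (intro insert_pair_in_diff_family[of "2*k-1" q])
      (auto simp: in_family_iff_last_rule assms(1) low_def)
qed

lemma last_only_in_diff_family_of_card_eq: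
  assumes "card D = k - 1" "2*k-1 \<notin> D" "2*k \<in> D"
  shows "D \<in> diff_family (family k)"
proof -
  define a where "a = low_count k D"
  have "D \<inter> {2*k-1, 2*k} = {2*k}"
    using assms(2,3) by blast
  then have "a \<le> k - 2"
    using card_by_blocks[OF _ D_sub] k_ge_4 assms(1) unfolding a_def by simp
  then consider "even a" "a \<noteq> k - 2" | "odd a" "a \<noteq> k - 3" | "a = k - 2" | "a = k - 3"
    by blast
  then show ?thesis
  proof cases
    case 1
    with \<open>a \<le> k - 2\<close> show ?thesis
      using assms(1) k_ge_4
      by (intro in_diff_family_by_extension[of "{}" "{2*k-1}" 1 0 0 0])
        (use assms in \<open>simp_all add: a_def in_family_iff_odd in_family_lastI\<close>)
  next
    case 2
    with \<open>a \<le> k - 2\<close> show ?thesis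
      using assms(1) k_ge_4
      by (intro in_diff_family_by_extension[of "{2*k-1}" "{}" 0 1 0 0])
        (use assms in \<open>simp_all add: a_def in_family_iff_odd not_in_family_lastI\<close>)
  next
    case 3
    then show ?thesis
      using last_only_in_diff_family_of_low_count_k_minus_2 assms unfolding a_def by simp
  next
    case 4
    then show ?thesis
      using last_only_in_diff_family_of_low_count_k_minus_3 assms unfolding a_def by simp
  qed
qed

lemma penult_only_in_diff_family_of_card_le:
  assumes "card D \<le> k - 2" "2*k-1 \<in> D" "2*k \<notin> D"
  shows "D \<in> diff_family (family k)"
proof -
  define a where "a = low_count k D"
  define b where "b = card (D \<inter> mid k)"
  define r where "r = k - card D"
  define q1 where "q1 = (if a = 0 then 2 else if even a then 0 else 1::nat)"
  have "D \<inter> {2*k-1, 2*k} = {2*k-1}"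
    using assms(2,3) by blast
  then have card_D: "card D = a + b + 1"
    using card_by_blocks[OF _ D_sub] k_ge_4 unfolding a_def b_def by simp
  have r: "r \<ge> 2" "card D + r = k"
    using assms(1) k_ge_4 unfolding r_def by auto
  have "r - 1 \<ge> 1"
    using r(1) by simp
  then obtain p1 where p1: "p1 \<le> r - 1" "r - 1 \<le> p1 + 1" "odd (a + p1)"
    using obtain_parity_adjusted[of "r - 1" a True] by auto
  have q1: "q1 \<le> 2" "even (a + q1)" "a + q1 \<ge> 2" "a \<ge> 1 \<Longrightarrow> q1 \<le> 1"
    unfolding q1_def by auto
  have "p1 + q1 \<le> k - 1 - a"
  proof (cases "a = 0 \<and> b = 0")
    case True
    then have "p1 \<noteq> r - 1"
      using p1(3) card_D r(2) even_k by auto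
    then show ?thesis
      using p1(1,2) q1(1) card_D r(2) by auto
  next
    case False
    then show ?thesis
      using p1(1) q1 card_D r by (cases "a = 0") auto
  qed
  then show ?thesis
    using card_D r p1 q1 assms(3) k_ge_4 even_k
    by (intro in_diff_family_by_extension[of "{2*k}" "{}" p1 q1 "r - 1 - p1" "r - q1"])
      (use assms in \<open>simp_all add: a_def b_def in_family_iff_odd not_in_family_penultI\<close>)
qed

lemma penult_only_in_diff_family_of_card_eq:
  assumes "card D = k - 1" "2*k-1 \<in> D" "2*k \<notin> D"
  shows "D \<in> diff_family (family k)"
proof -
  define a where "a = low_count k D"
  define b where "b = card (D \<inter> mid k)"
  have "D \<inter> {2*k-1, 2*k} = {2*k-1}"
    using assms(2,3) by blast
  then have ab: "a + b = k - 2"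
    using card_by_blocks[OF _ D_sub] k_ge_4 assms(1) unfolding a_def b_def by simp
  show ?thesis
  proof (cases "odd a")
    case True
    then have "a \<ge> 1"
      by (cases a) auto
    with True show ?thesis
      using ab assms k_ge_4 even_k
      by (intro in_diff_family_by_extension[of "{2*k}" "{}" 0 1 0 0])
        (simp_all add: a_def b_def in_family_iff_odd not_in_family_penultI)
  next
    case False
    define p1 where "p1 = (if a = 0 then 0 else 1::nat)"
    have "a \<noteq> 1" "a \<le> k - 2"
      using False ab by auto
    with False show ?thesis
      using ab assms k_ge_4 even_k
      by (intro in_diff_family_by_extension[of "{}" "{2*k}" p1 0 "1 - p1" 0])
        (auto simp: a_def b_def p1_def in_family_iff_odd in_family_penultI)
  qed
qed

lemma small_set_in_diff_family:
  assumes "card D \<le> k - 1"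
  shows "D \<in> diff_family (family k)"
proof -
  have size: "card D = k - 1 \<or> card D \<le> k - 2"
    using assms by auto
  consider "2*k-1 \<in> D" "2*k \<in> D" | "2*k-1 \<notin> D" "2*k \<notin> D"
    | "2*k-1 \<notin> D" "2*k \<in> D" | "2*k-1 \<in> D" "2*k \<notin> D"
    by blast
  then show ?thesis
  proof cases
    case 1
    then show ?thesis
      using both_tops_in_diff_family assms by simp
  next
    case 2
    then show ?thesis
      using size no_top_in_diff_family_of_card_eq no_top_in_diff_family_of_card_le by auto
  next
    case 3
    then show ?thesis
      using size last_only_in_diff_family_of_card_eq last_only_in_diff_family_of_card_le by auto
  next
    case 4
    then show ?thesis
      using size penult_only_in_diff_family_of_card_eq penult_only_in_diff_family_of_card_le by auto
  qed
qed

end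

theorem theorem1:
  fixes k :: nat
  assumes "k \<ge> 4" and "even k"
  shows "\<exists>F. F \<subseteq> ksubsets {1..2*k} k \<and> intersecting F \<and>
            diff_family F = (\<Union>j\<in>{0..k-1}. ksubsets {1..2*k} j) \<and>
            ksubsets {1..2*k} (k-1) \<subseteq> diff_family F"
proof -
  have family_sub: "family k \<subseteq> ksubsets {1..2*k} k"
    by (auto simp: family_def)
  have "{1..2*k} - A \<notin> family k" if "A \<in> family k" for A
    using that in_family_complement[OF assms(2)] assms(1) by (auto simp: family_def ksubsets_def)
  then have "intersecting (family k)"
    using intersecting_if_no_complements[OF _ _ family_sub] by simp
  moreover have "diff_family (family k) = (\<Union>j\<in>{0..k-1}. ksubsets {1..2*k} j)"
  proof
    show "diff_family (family k) \<subseteq> (\<Union>j\<in>{0..k-1}. ksubsets {1..2*k} j)"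
      using diff_family_subset_if_intersecting[OF _ family_sub \<open>intersecting (family k)\<close>] by simp
    show "(\<Union>j\<in>{0..k-1}. ksubsets {1..2*k} j) \<subseteq> diff_family (family k)"
      using small_set_in_diff_family[OF assms] by (auto simp: ksubsets_def)
  qed
  moreover have "ksubsets {1..2*k} (k-1) \<subseteq> (\<Union>j\<in>{0..k-1}. ksubsets {1..2*k} j)"
    by (intro UN_upper) simp
  ultimately show ?thesis
    using family_sub by (metis (no_types, lifting))
qed

end
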